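(* Every class $[\mathfrak{p}]\in\mathfrak{F}_4''$ contains a unique quadruple of the form $$p_1=(1,\tan a),\quad p_2=\infty,\quad p_3=(0,0),\quad p_4=(z,t),$$ where $a\in(-\pi/2,\pi/2)$ (in fact $a=\mathbb{A}(p_1,p_2,p_3)$), $z\in\mathbb{C}\setminus\{0\}$, $t\in\mathbb{R}$ and $t\neq |z|^2\tan a$. The map $\mathcal{B}_0:\mathfrak{F}_4''\to\mathcal{C}'(\mathfrak{H}^\star)$, $\mathcal{B}_0([\mathfrak{p}])=(z,t,e^{\tan a})$, is a well-defined bijection onto $$\mathcal{C}'(\mathfrak{H}^\star)=\{(z,t,r)\in(\mathbb{C}\setminus\{0\})\times\mathbb{R}\times\mathbb{R}_{>0}\;:\;\log r\neq t/|z|^2\}.$$ Consequently $\mathfrak{F}_4''$ inherits (by transport of structure via $\mathcal{B}_0$) the Kähler structure of the open subset $\mathcal{C}'(\mathfrak{H}^\star)$ of the Riemannian cone $\mathcal{C}(\mathfrak{H}^\star)$.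
   Context: Let $\mathbb{C}^{2,1}$ denote $\mathbb{C}^3$ with the Hermitian form $\langle \mathbf z,\mathbf w\rangle=z_1\overline{w_3}+z_2\overline{w_2}+z_3\overline{w_1}$. The boundary $\partial\mathbf{H}^2_\mathbb{C}$ of complex hyperbolic plane is the set of complex lines of null vectors; it is identified with $(\mathbb{C}\times\mathbb{R})\cup\{\infty\}$, where $(z,t)$ corresponds to the line spanned by $(-|z|^2+it,\sqrt2 z,1)^T$ and $\infty$ to the line spanned by $(1,0,0)^T$. The group ${\rm PU}(2,1)$ (projectivised unitary group of $\langle\cdot,\cdot\rangle$) acts on $\partial\mathbf{H}^2_\mathbb{C}$. A $\mathbb{C}$-circle is the intersection of $\partial\mathbf{H}^2_\mathbb{C}$ with the projectivisation of a complex 2-dimensional subspace of $\mathbb{C}^{2,1}$ on which the form has signature $(1,1)$ (i.e. the boundary of a complex geodesic). Cartan's angular invariant of a triple of distinct boundary points with lifts $\mathbf p_i$ is $\mathbb{A}(p_1,p_2,p_3)=\arg\left(-\langle\mathbf p_1,\mathbf p_2\rangle\langle\mathbf p_2,\mathbf p_3\rangle\langle\mathbf p_3,\mathbf p_1\rangle\right)\in[-\pi/2,\pi/2]$. Let $\mathfrak{C}_4''$ be the set of ordered quadruples $\mathfrak{p}=(p_1,p_2,p_3,p_4)$ of pairwise distinct points of $\partial\mathbf{H}^2_\mathbb{C}$ such that: $p_1,p_2,p_3$ do not lie on a common $\mathbb{C}$-circle; $p_2,p_3,p_4$ do not lie on a common $\mathbb{C}$-circle; and $p_4$ is not in the orbit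 of $p_1$ under the subgroup of ${\rm PU}(2,1)$ fixing $p_2$ and $p_3$. Let $\mathfrak{F}_4''=\mathfrak{C}_4''/{\rm PU}(2,1)$ (diagonal action). The affine-rotational group $\mathfrak{H}^\star$ is $(\mathbb{C}\setminus\{0\})\times\mathbb{R}$ with product $(z,t)\star(w,s)=(zw,t+s|z|^2)$. On it, with $z=x+iy$, let $\mathbf{X}=x\partial_x+y\partial_y$, $\mathbf{Y}=x\partial_y-y\partial_x-2|z|^2\partial_t$, $\mathbf{T}=x\partial_y-y\partial_x$, let $\omega^\star=\frac{dt+2x\,dy-2y\,dx}{2|z|^2}$, and let $g^\star$ be the Riemannian metric for which $\{\mathbf X,\mathbf Y,\mathbf T\}$ is orthonormal. The Riemannian cone is $\mathcal{C}(\mathfrak{H}^\star)=\mathfrak{H}^\star\times\mathbb{R}_{>0}$ with metric $dr^2+r^2g^\star$, almost complex structure $\mathbb{J}\mathbf X=\mathbf Y$, $\mathbb{J}\mathbf Y=-\mathbf X$, $\mathbb{J}\mathbf T=-r\partial_r$, $\mathbb{J}(r\partial_r)=\mathbf T$, and 2-form $d(r^2\omega^\star/2)$; this is a Kähler manifold. *)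

theory Defs
  imports "HOL-Analysis.Analysis"
begin

text \<open>Vectors of C^{2,1} are elements of complex^3; the Hermitian form of signature (2,1).\<close>

definition herm :: "complex^3 \<Rightarrow> complex^3 \<Rightarrow> complex" where
  "herm v w = v$1 * cnj (w$3) + v$2 * cnj (w$2) + v$3 * cnj (w$1)"

definition vec3 :: "complex \<Rightarrow> complex \<Rightarrow> complex \<Rightarrow> complex^3" where
  "vec3 a b c = (\<chi> i. if i = 1 then a else if i = 2 then b else c)"

text \<open>Boundary points: None is \<infinity>, Some (z,t) is the Heisenberg point (z,t).\<close>
type_synonym bpt = "(complex \<times> real) option"

definition lift :: "bpt \<Rightarrow> complex^3" where
  "lift p = (case p of None \<Rightarrow> vec3 1 0 0
     | Some (z, t) \<Rightarrow> vec3 (- complex_of_real ((cmod z)\<^sup>2) + \<i> * complex_of_real t)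
                          (complex_of_real (sqrt 2) * z) 1)"

text \<open>The unitary group U(2,1) of the form (PU(2,1) acts through it).\<close>
definition U21 :: "(complex^3^3) set" where
  "U21 = {A. invertible A \<and> (\<forall>v w. herm (A *v v) (A *v w) = herm v w)}"

definition acts :: "complex^3^3 \<Rightarrow> bpt \<Rightarrow> bpt \<Rightarrow> bool" where
  "acts A p q \<longleftrightarrow> (\<exists>c. c \<noteq> 0 \<and> A *v lift p = c *s lift q)"

type_synonym quad = "bpt \<times> bpt \<times> bpt \<times> bpt"

definition pu_equiv :: "quad \<Rightarrow> quad \<Rightarrow> bool" where
  "pu_equiv p q \<longleftrightarrow> (case p of (p1, p2, p3, p4) \<Rightarrow> case q of (q1, q2, q3, q4) \<Rightarrow>
      (\<exists>A\<in>U21. acts A p1 q1 \<and> acts A p2 q2 \<and> acts A p3 q3 \<and> acts A p4 q4))"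

text \<open>C-circles: boundaries of complex geodesics, i.e. boundary points whose lifts lie in
  a complex 2-dimensional subspace on which the form has signature (1,1) (given by a
  basis u, w with h(u,u)=1, h(w,w)=-1, h(u,w)=0).\<close>
definition C_circles :: "bpt set set" where
  "C_circles = {{p. \<exists>a b. lift p = a *s u + b *s w} | u w.
      herm u u = 1 \<and> herm w w = -1 \<and> herm u w = 0}"

definition on_C_circle :: "bpt \<Rightarrow> bpt \<Rightarrow> bpt \<Rightarrow> bool" where
  "on_C_circle p q r \<longleftrightarrow> (\<exists>C\<in>C_circles. p \<in> C \<and> q \<in> C \<and> r \<in> C)"

definition cartan :: "bpt \<Rightarrow> bpt \<Rightarrow> bpt \<Rightarrow> real" where
  "cartan p1 p2 p3 = Arg (- (herm (lift p1) (lift p2) * herm (lift p2) (lift p3)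
                             * herm (lift p3) (lift p1)))"

definition C4'' :: "quad set" where
  "C4'' = {(p1, p2, p3, p4). p1 \<noteq> p2 \<and> p1 \<noteq> p3 \<and> p1 \<noteq> p4 \<and> p2 \<noteq> p3 \<and> p2 \<noteq> p4 \<and> p3 \<noteq> p4
      \<and> \<not> on_C_circle p1 p2 p3 \<and> \<not> on_C_circle p2 p3 p4
      \<and> \<not> (\<exists>A\<in>U21. acts A p2 p2 \<and> acts A p3 p3 \<and> acts A p1 p4)}"

definition F4'' :: "quad set set" where
  "F4'' = C4'' // {(p, q). p \<in> C4'' \<and> q \<in> C4'' \<and> pu_equiv p q}"

definition NF :: "real \<Rightarrow> complex \<Rightarrow> real \<Rightarrow> quad" where
  "NF a z t = (Some (1, tan a), None, Some (0, 0), Some (z, t))"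

definition C'_Hstar :: "(complex \<times> real \<times> real) set" where
  "C'_Hstar = {(z, t, r). z \<noteq> 0 \<and> r > 0 \<and> ln r \<noteq> t / (cmod z)\<^sup>2}"

end

theory Submission
  imports Defs
begin

text \<open>A Heisenberg translation followed by the inversion swapping \<open>\<infinity>\<close> and \<open>(0,0)\<close>
  moves \<open>p\<^sub>2\<close> to \<open>\<infinity>\<close> and \<open>p\<^sub>3\<close> to \<open>(0,0)\<close>. The isometries fixing these two points act by the
  dilation-rotations \<open>(z,t) \<mapsto> (kz, |k|\<^sup>2t)\<close>; the one with \<open>k = 1/w\<close> moves \<open>p\<^sub>1 = (w,u)\<close>
  to a point \<open>(1,s)\<close> (here \<open>w \<noteq> 0\<close> since \<open>p\<^sub>1, p\<^sub>2, p\<^sub>3\<close> are not on a \<open>\<complex>\<close>-circle), and the normal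
  form is unique because only \<open>k = 1\<close> fixes \<open>(1,s)\<close>. Its Cartan invariant is \<open>arg(1 + is)\<close>, so
  \<open>s = tan a\<close>. The \<open>\<complex>\<close>-circle through \<open>\<infinity>\<close> and \<open>(0,0)\<close> is the vertical chain \<open>z = 0\<close> and the
  dilation-rotation orbit of \<open>(1,s)\<close> is \<open>t = |z|\<^sup>2s\<close>; these are exactly the excluded positions of
  \<open>p\<^sub>4\<close>, so the parameters \<open>(z, t, e\<^sup>s)\<close> fill \<open>C'(H\<^sup>\<star>)\<close>.\<close>

section \<open>The Hermitian form and its isometries\<close>

lemma num3_distinct [simp]:
  "(1::3) \<noteq> 2" "(1::3) \<noteq> 3" "(2::3) \<noteq> 3" "(2::3) \<noteq> 1" "(3::3) \<noteq> 1" "(3::3) \<noteq> 2"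
  by (simp_all add: eq_commute)

lemma vec3_nth [simp]: "vec3 a b c $ 1 = a" "vec3 a b c $ 2 = b" "vec3 a b c $ 3 = c"
  by (simp_all add: vec3_def)

lemma vec3_eq_iff: "(v::complex^3) = w \<longleftrightarrow> v$1 = w$1 \<and> v$2 = w$2 \<and> v$3 = w$3"
  by (simp add: vec_eq_iff forall_3)

lemma herm_vec3: "herm (vec3 a b c) (vec3 a' b' c') = a * cnj c' + b * cnj b' + c * cnj a'"
  by (simp add: herm_def)

lemma herm_add_left: "herm (x + y) w = herm x w + herm y w"
  by (simp add: herm_def algebra_simps)

lemma herm_add_right: "herm w (x + y) = herm w x + herm w y"
  by (simp add: herm_def algebra_simps)

lemma herm_scale_left: "herm (c *s x) w = c * herm x w"
  by (simp add: herm_def algebra_simps)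

lemma herm_scale_right: "herm w (c *s x) = cnj c * herm w x"
  by (simp add: herm_def algebra_simps)

lemma herm_commute: "herm w v = cnj (herm v w)"
  by (simp add: herm_def algebra_simps)

lemma herm_nondegenerate: assumes "\<And>w. herm x w = 0" shows "x = 0"
  using assms[of "vec3 1 0 0"] assms[of "vec3 0 1 0"] assms[of "vec3 0 0 1"]
  by (simp add: herm_def vec3_eq_iff)

definition herm_isometry :: "complex^3^3 \<Rightarrow> bool" where
  "herm_isometry A \<longleftrightarrow> (\<forall>v w. herm (A *v v) (A *v w) = herm v w)"

lemma herm_isometryD: "herm_isometry A \<Longrightarrow> herm (A *v v) (A *v w) = herm v w"
  by (simp add: herm_isometry_def)

lemma herm_isometry_kernel: assumes "herm_isometry A" "A *v x = 0" shows "x = 0"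
proof (rule herm_nondegenerate)
  fix w
  have "herm x w = herm (A *v x) (A *v w)" using assms(1) by (simp add: herm_isometryD)
  then show "herm x w = 0" using assms(2) by (simp add: herm_def)
qed

lemma herm_isometry_inverse:
  assumes "herm_isometry A" obtains B where "B ** A = mat 1" "A ** B = mat 1"
proof -
  have "\<exists>B. B ** A = mat 1"
    using herm_isometry_kernel[OF assms] unfolding matrix_left_invertible_ker by blast
  then obtain B where "B ** A = mat 1" ..
  with matrix_left_right_inverse that show ?thesis by blast
qed

lemma U21_iff_herm_isometry: "A \<in> U21 \<longleftrightarrow> herm_isometry A"
  unfolding U21_def herm_isometry_def invertible_def
  by (blast elim: herm_isometry_inverse[unfolded herm_isometry_def])

lemma herm_isometry_mult: "herm_isometry A \<Longrightarrow> herm_isometry B \<Longrightarrow> herm_isometry (A ** B)"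
  by (simp add: herm_isometry_def flip: matrix_vector_mul_assoc)

lemma herm_isometry_right_inverse:
  assumes "herm_isometry A" "A ** B = mat 1" shows "herm_isometry B"
  unfolding herm_isometry_def
  by (metis assms herm_isometryD matrix_vector_mul_assoc matrix_vector_mul_lid)

lemma herm_isometry_one: "herm_isometry (mat 1)"
  by (simp add: herm_isometry_def)

definition matrix_of_cols :: "complex^3 \<Rightarrow> complex^3 \<Rightarrow> complex^3 \<Rightarrow> complex^3^3" where
  "matrix_of_cols f1 f2 f3 = (\<chi> i j. if j = 1 then f1$i else if j = 2 then f2$i else f3$i)"

lemma matrix_of_cols_mult:
  "matrix_of_cols f1 f2 f3 *v v = v$1 *s f1 + v$2 *s f2 + v$3 *s f3"
  by (simp add: vec3_eq_iff matrix_of_cols_def matrix_vector_mult_def sum_3 algebra_simps)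

lemma matrix_of_cols_basis:
  "matrix_of_cols f1 f2 f3 *v vec3 1 0 0 = f1" "matrix_of_cols f1 f2 f3 *v vec3 0 1 0 = f2"
  "matrix_of_cols f1 f2 f3 *v vec3 0 0 1 = f3"
  by (simp_all add: matrix_of_cols_mult vec3_eq_iff)

lemma herm_isometry_matrix_of_cols:
  assumes "herm f1 f1 = 0" "herm f2 f2 = 1" "herm f3 f3 = 0"
    and "herm f1 f2 = 0" "herm f1 f3 = 1" "herm f2 f3 = 0"
  shows "herm_isometry (matrix_of_cols f1 f2 f3)"
proof -
  have "herm f2 f1 = 0" "herm f3 f1 = 1" "herm f3 f2 = 0"
    using assms herm_commute by (metis complex_cnj_zero complex_cnj_one)+
  with assms show ?thesis
    unfolding herm_isometry_def matrix_of_cols_mult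
    by (simp add: herm_add_left herm_add_right herm_scale_left herm_scale_right) (simp add: herm_def)
qed

lemma matrix_vector_mult_scale: "(A::complex^3^3) *v (c *s x) = c *s (A *v x)"
  by (simp add: vec_eq_iff matrix_vector_mult_def sum_distrib_left mult.left_commute)

section \<open>The action on the boundary\<close>

lemma lift_nonzero: "lift p \<noteq> 0"
  by (cases p) (auto simp: lift_def vec3_eq_iff)

lemma lift_null: "herm (lift p) (lift p) = 0"
proof (cases p)
  case (Some zt)
  obtain z t where "p = Some (z, t)" using Some by (cases zt) auto
  moreover have "complex_of_real (sqrt 2) * z * cnj (complex_of_real (sqrt 2) * z)
      = 2 * complex_of_real ((cmod z)\<^sup>2)"
    by (simp add: complex_eq_iff cmod_power2 algebra_simps) (simp add: power2_eq_square)
  ultimately show ?thesis by (simp add: lift_def herm_def complex_eq_iff)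
qed (simp add: lift_def herm_def)

lemma lift_eq_scaled_imp_eq: assumes "lift p = c *s lift q" shows "p = q"
  using assms
  by (cases p; cases q) (auto simp: lift_def vec_eq_iff forall_3 complex_eq_iff split: prod.splits)

lemma null_vector_eq_scaled_lift:
  assumes "herm v v = 0" "v \<noteq> 0" obtains q c where "c \<noteq> 0" "v = c *s lift q"
proof (cases "v$3 = 0")
  case True
  with assms(1) have "v$2 * cnj (v$2) = 0" by (simp add: herm_def)
  with True assms(2) have "v = v$1 *s lift None" "v$1 \<noteq> 0"
    by (auto simp: lift_def vec3_eq_iff)
  then show ?thesis using that by blast
next
  case False
  define a b where "a = v$1 / v$3" and "b = v$2 / v$3"
  define z where "z = b / complex_of_real (sqrt 2)"
  have "herm v v = v$3 * cnj (v$3) * (a + b * cnj b + cnj a)"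
    using False by (simp add: herm_def a_def b_def field_simps)
  with assms(1) False have "Re (a + b * cnj b + cnj a) = 0" by simp
  then have "2 * Re a + (cmod b)\<^sup>2 = 0" by (simp add: complex_mult_cnj cmod_power2)
  moreover have "(cmod b)\<^sup>2 = 2 * (cmod z)\<^sup>2" by (simp add: z_def norm_divide power_divide)
  ultimately have "a = - complex_of_real ((cmod z)\<^sup>2) + \<i> * complex_of_real (Im a)"
    by (simp add: complex_eq_iff)
  moreover have "b = complex_of_real (sqrt 2) * z" by (simp add: z_def)
  moreover have "v$1 = v$3 * a" "v$2 = v$3 * b" using False by (simp_all add: a_def b_def)
  ultimately have "v = v$3 *s lift (Some (z, Im a))"
    by (simp add: lift_def vec3_eq_iff)
  then show ?thesis using False that by blast
qed

lemma acts_unique: assumes "acts A p q" "acts A p q'" shows "q = q'"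
proof -
  obtain c d where "c \<noteq> 0" "A *v lift p = c *s lift q" "A *v lift p = d *s lift q'"
    using assms acts_def by blast
  then have "lift q = (d / c) *s lift q'" by (simp add: vec3_eq_iff field_simps)
  then show ?thesis by (rule lift_eq_scaled_imp_eq)
qed

lemma acts_injective: assumes "herm_isometry A" "acts A p q" "acts A p' q" shows "p = p'"
proof -
  obtain c d where "A *v lift p = c *s lift q" "d \<noteq> 0" "A *v lift p' = d *s lift q"
    using assms(2,3) acts_def by blast
  then have "A *v (lift p - (c / d) *s lift p') = 0"
    by (simp add: matrix_vector_mult_diff_distrib matrix_vector_mult_scale vec3_eq_iff field_simps)
  then have "lift p - (c / d) *s lift p' = 0" by (rule herm_isometry_kernel[OF assms(1)])
  then have "lift p = (c / d) *s lift p'" by simp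
  then show ?thesis by (rule lift_eq_scaled_imp_eq)
qed

lemma acts_mult: assumes "acts A p q" "acts B q r" shows "acts (B ** A) p r"
proof -
  obtain c d where "c \<noteq> 0" "A *v lift p = c *s lift q" "d \<noteq> 0" "B *v lift q = d *s lift r"
    using assms acts_def by blast
  then have "c * d \<noteq> 0" "(B ** A) *v lift p = (c * d) *s lift r"
    by (simp_all add: matrix_vector_mult_scale flip: matrix_vector_mul_assoc)
  then show ?thesis unfolding acts_def by blast
qed

lemma acts_left_inverse: assumes "acts A p q" "B ** A = mat 1" shows "acts B q p"
proof -
  obtain c where c: "c \<noteq> 0" "A *v lift p = c *s lift q" using assms(1) acts_def by blast
  then have "lift p = c *s (B *v lift q)"
    by (metis assms(2) matrix_vector_mul_assoc matrix_vector_mul_lid matrix_vector_mult_scale)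
  then have "B *v lift q = (1/c) *s lift p" using c(1) by (simp add: vec3_eq_iff)
  then show ?thesis using c(1) unfolding acts_def by (intro exI[of _ "1/c"]) simp
qed

lemma acts_exists: assumes "herm_isometry A" obtains q where "acts A p q"
proof -
  have "herm (A *v lift p) (A *v lift p) = 0"
    using assms lift_null by (simp add: herm_isometryD)
  moreover have "A *v lift p \<noteq> 0" using herm_isometry_kernel[OF assms] lift_nonzero by blast
  ultimately show ?thesis
    using that unfolding acts_def by (metis null_vector_eq_scaled_lift)
qed

lemma acts_one: "acts (mat 1) p p"
  unfolding acts_def by (rule exI[of _ 1]) (simp add: vec3_eq_iff)

lemma lift_inf: "lift None = vec3 1 0 0"
  by (simp add: lift_def)

lemma lift_origin: "lift (Some (0, 0)) = vec3 0 0 1"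
  by (simp add: lift_def)

lemma isometry_swapping_inf_origin:
  obtains S where "herm_isometry S" "acts S None (Some (0, 0))" "acts S (Some (0, 0)) None"
proof
  let ?S = "matrix_of_cols (vec3 0 0 1) (vec3 0 1 0) (vec3 1 0 0)"
  show "herm_isometry ?S" by (rule herm_isometry_matrix_of_cols) (simp_all add: herm_vec3)
  show "acts ?S None (Some (0, 0))" "acts ?S (Some (0, 0)) None"
    unfolding acts_def by (auto intro!: exI[of _ 1] simp: lift_inf lift_origin matrix_of_cols_basis)
qed

text \<open>\<open>M\<close> is the Heisenberg translation by \<open>(z,s)\<close>; the lemma takes its inverse.\<close>
lemma isometry_translating_to_origin:
  obtains T where "herm_isometry T" "acts T None None" "acts T (Some (z, s)) (Some (0, 0))"
proof -
  define M where "M = matrix_of_cols (vec3 1 0 0) (vec3 (- complex_of_real (sqrt 2) * cnj z) 1 0)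
                       (lift (Some (z, s)))"
  have M: "herm_isometry M"
    unfolding M_def using lift_null[of "Some (z, s)"]
    by (intro herm_isometry_matrix_of_cols) (simp_all add: herm_vec3 lift_def)
  have "acts M None None" "acts M (Some (0, 0)) (Some (z, s))"
    unfolding acts_def M_def
    by (auto intro!: exI[of _ 1] simp: lift_inf lift_origin matrix_of_cols_basis)
  moreover obtain T where "T ** M = mat 1" "M ** T = mat 1" using herm_isometry_inverse[OF M] .
  ultimately show ?thesis
    using that herm_isometry_right_inverse[OF M] acts_left_inverse by blast
qed

lemma isometry_to_inf: obtains A where "herm_isometry A" "acts A p None"
proof (cases p)
  case None
  then show ?thesis using that herm_isometry_one acts_one by blast
next
  case (Some zs)
  obtain T where T: "herm_isometry T" "acts T p (Some (0, 0))"
    using isometry_translating_to_origin Some by (metis prod.exhaust)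
  obtain S where S: "herm_isometry S" "acts S (Some (0, 0)) None"
    using isometry_swapping_inf_origin by metis
  show ?thesis using that[of "S ** T"] herm_isometry_mult acts_mult S T by blast
qed

section \<open>Dilation-rotations and the stabiliser of \<open>\<infinity>\<close> and \<open>(0,0)\<close>\<close>

definition dilation :: "complex \<Rightarrow> complex^3^3" where
  "dilation k = matrix_of_cols (vec3 (cnj k) 0 0) (vec3 0 1 0) (vec3 0 0 (1/k))"

lemma herm_isometry_dilation: "k \<noteq> 0 \<Longrightarrow> herm_isometry (dilation k)"
  unfolding dilation_def by (rule herm_isometry_matrix_of_cols) (simp_all add: herm_vec3)

lemma of_real_norm_mult_power2:
  "(complex_of_real (cmod (k * w)))\<^sup>2 = k * cnj k * (complex_of_real (cmod w))\<^sup>2"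
  using complex_norm_square[of k] by (simp add: norm_mult power_mult_distrib)

lemma acts_dilation:
  assumes "k \<noteq> 0" shows "acts (dilation k) (Some (w, u)) (Some (k * w, (cmod k)\<^sup>2 * u))"
proof -
  have "(complex_of_real (cmod k))\<^sup>2 = k * cnj k"
    using complex_norm_square[of k] by simp
  then have "dilation k *v lift (Some (w, u)) = (1/k) *s lift (Some (k * w, (cmod k)\<^sup>2 * u))"
    using assms
    by (simp add: of_real_norm_mult_power2 dilation_def matrix_of_cols_mult lift_def
        vec3_eq_iff field_simps)
  then show ?thesis unfolding acts_def using assms by (intro exI[of _ "1/k"]) simp
qed

lemma acts_dilation_inf: "k \<noteq> 0 \<Longrightarrow> acts (dilation k) None None"
  unfolding acts_def
  by (rule exI[of _ "cnj k"]) (simp add: dilation_def matrix_of_cols_basis lift_inf vec3_eq_iff)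

lemma acts_dilation_origin: "k \<noteq> 0 \<Longrightarrow> acts (dilation k) (Some (0, 0)) (Some (0, 0))"
  using acts_dilation[of k 0 0] by simp

lemma matrix_vector_mult_basis_expansion:
  "(A::complex^3^3) *v v
     = v$1 *s (A *v vec3 1 0 0) + v$2 *s (A *v vec3 0 1 0) + v$3 *s (A *v vec3 0 0 1)"
  by (simp add: vec3_eq_iff matrix_vector_mult_def sum_3 mult.commute)

text \<open>An isometry fixing \<open>\<infinity>\<close> and \<open>(0,0)\<close> is diagonal, \<open>diag(c, g, d)\<close> with \<open>c d\<^sup>* = 1\<close>
  and \<open>|g| = 1\<close>; projectively it is the dilation-rotation by \<open>k = g/d\<close>.\<close>
lemma stabiliser_acts_as_dilation:
  assumes "herm_isometry A" "acts A None None" "acts A (Some (0, 0)) (Some (0, 0))"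
  obtains k where "k \<noteq> 0" "\<And>z t. acts A (Some (z, t)) (Some (k * z, (cmod k)\<^sup>2 * t))"
proof -
  obtain c where c: "c \<noteq> 0" "A *v vec3 1 0 0 = c *s vec3 1 0 0"
    using assms(2) by (auto simp: acts_def lift_inf)
  obtain d where d: "d \<noteq> 0" "A *v vec3 0 0 1 = d *s vec3 0 0 1"
    using assms(3) by (auto simp: acts_def lift_origin)
  define g where "g = A *v vec3 0 1 0"
  note h = herm_isometryD[OF assms(1)]
  have "herm g (c *s vec3 1 0 0) = 0" "herm g (d *s vec3 0 0 1) = 0"
    using h[of "vec3 0 1 0" "vec3 1 0 0"] h[of "vec3 0 1 0" "vec3 0 0 1"] c d g_def
    by (simp_all add: herm_vec3)
  then have g13: "g$3 = 0" "g$1 = 0" using c(1) d(1) by (simp_all add: herm_def)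
  have "herm (c *s vec3 1 0 0) (d *s vec3 0 0 1) = 1"
    using h[of "vec3 1 0 0" "vec3 0 0 1"] c d by (simp add: herm_vec3)
  then have cd: "c = 1 / cnj d" using d(1) by (simp add: herm_def field_simps)
  have "herm g g = 1" using h[of "vec3 0 1 0" "vec3 0 1 0"] g_def by (simp add: herm_vec3)
  then have gg: "g$2 * cnj (g$2) = 1" using g13 by (simp add: herm_def)
  define k where "k = g$2 / d"
  have g2: "g$2 = k * d" using d(1) by (simp add: k_def)
  have kk: "(complex_of_real (cmod k))\<^sup>2 = 1 / (d * cnj d)"
    using gg d(1) complex_norm_square[of k] by (simp add: k_def field_simps)
  have kc: "d * (k * (cnj d * cnj k)) = 1" using gg d(1) by (simp add: k_def field_simps)
  have "k \<noteq> 0" using gg d(1) by (auto simp: k_def)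
  moreover have "acts A (Some (z, t)) (Some (k * z, (cmod k)\<^sup>2 * t))" for z t
  proof -
    have "A *v lift (Some (z, t)) = d *s lift (Some (k * z, (cmod k)\<^sup>2 * t))"
      using d(1)
      by (subst matrix_vector_mult_basis_expansion)
        (simp add: c d g13 g2 kk kc cd lift_def vec3_eq_iff of_real_norm_mult_power2
          field_simps flip: g_def)
    then show ?thesis using d(1) unfolding acts_def by blast
  qed
  ultimately show ?thesis using that by blast
qed

lemma stabiliser_orbit_iff:
  "(\<exists>A\<in>U21. acts A None None \<and> acts A (Some (0, 0)) (Some (0, 0)) \<and> acts A (Some (w, u)) (Some (z, t)))
     \<longleftrightarrow> (\<exists>k. k \<noteq> 0 \<and> z = k * w \<and> t = (cmod k)\<^sup>2 * u)"
proof
  assume "\<exists>A\<in>U21. acts A None None \<and> acts A (Some (0, 0)) (Some (0, 0)) \<and> acts A (Some (w, u)) (Some (z, t))"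
  then obtain A where A: "herm_isometry A" "acts A None None" "acts A (Some (0, 0)) (Some (0, 0))"
      "acts A (Some (w, u)) (Some (z, t))"
    by (auto simp: U21_iff_herm_isometry)
  obtain k where "k \<noteq> 0" "acts A (Some (w, u)) (Some (k * w, (cmod k)\<^sup>2 * u))"
    using stabiliser_acts_as_dilation[OF A(1-3)] by metis
  with acts_unique[OF A(4)] show "\<exists>k. k \<noteq> 0 \<and> z = k * w \<and> t = (cmod k)\<^sup>2 * u" by auto
next
  assume "\<exists>k. k \<noteq> 0 \<and> z = k * w \<and> t = (cmod k)\<^sup>2 * u"
  then show "\<exists>A\<in>U21. acts A None None \<and> acts A (Some (0, 0)) (Some (0, 0)) \<and> acts A (Some (w, u)) (Some (z, t))"
    by (metis U21_iff_herm_isometry herm_isometry_dilation acts_dilation acts_dilation_inf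
        acts_dilation_origin)
qed

section \<open>\<open>\<complex>\<close>-circles\<close>

lemma on_C_circle_rotate: "on_C_circle p q r \<longleftrightarrow> on_C_circle q r p"
  unfolding on_C_circle_def by blast

lemma span_basis_ends_middle_zero:
  assumes "vec3 1 0 0 = a *s u + b *s w" "vec3 0 0 1 = c *s u + d *s w"
  shows "u$2 = 0 \<and> w$2 = 0"
proof -
  have e: "1 = a * u$1 + b * w$1" "0 = a * u$2 + b * w$2" "0 = a * u$3 + b * w$3"
      "0 = c * u$1 + d * w$1" "0 = c * u$2 + d * w$2" "1 = c * u$3 + d * w$3"
    using assms by (simp_all add: vec3_eq_iff)
  define D where "D = a * d - b * c"
  have "D * u$2 = d * (a * u$2 + b * w$2) - b * (c * u$2 + d * w$2)"
       "D * w$2 = a * (c * u$2 + d * w$2) - c * (a * u$2 + b * w$2)"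
       "D * u$1 = d * (a * u$1 + b * w$1) - b * (c * u$1 + d * w$1)"
       "D * w$3 = a * (c * u$3 + d * w$3) - c * (a * u$3 + b * w$3)"
    by (simp_all add: D_def algebra_simps)
  then show ?thesis
    using e by (cases "D = 0") (auto simp: D_def)
qed

lemma on_C_circle_inf_origin_iff: "on_C_circle None (Some (0, 0)) (Some (z, t)) \<longleftrightarrow> z = 0"
proof
  assume "on_C_circle None (Some (0, 0)) (Some (z, t))"
  then obtain C where C: "C \<in> C_circles" "None \<in> C" "Some (0, 0) \<in> C" "Some (z, t) \<in> C"
    unfolding on_C_circle_def by blast
  then obtain u w where "C = {p. \<exists>a b. lift p = a *s u + b *s w}"
    unfolding C_circles_def by blast
  with C obtain a b c d a' b' where "vec3 1 0 0 = a *s u + b *s w" "vec3 0 0 1 = c *s u + d *s w"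
      "lift (Some (z, t)) = a' *s u + b' *s w"
    by (auto simp: lift_inf lift_origin)
  then have "u$2 = 0 \<and> w$2 = 0" "lift (Some (z, t)) = a' *s u + b' *s w"
    using span_basis_ends_middle_zero by blast+
  then have "lift (Some (z, t)) $ 2 = 0" by simp
  then show "z = 0" by (simp add: lift_def)
next
  assume z: "z = 0"
  define r where "r = complex_of_real (sqrt 2 / 2)"
  have rr: "r * r = 1/2" "cnj r = r" unfolding r_def by (simp_all flip: of_real_mult)
  then have "r \<noteq> 0" by auto
  define u w where "u = vec3 r 0 r" and "w = vec3 r 0 (-r)"
  define C where "C = {p. \<exists>a b. lift p = a *s u + b *s w}"
  have "C \<in> C_circles"
    unfolding C_circles_def C_def
    by (intro CollectI exI[of _ u] exI[of _ w]) (simp add: u_def w_def herm_vec3 rr)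
  moreover have "p \<in> C" if "lift p $ 2 = 0" for p
  proof -
    let ?x = "lift p"
    have "?x = ((?x$1 + ?x$3) / (2*r)) *s u + ((?x$1 - ?x$3) / (2*r)) *s w"
      using that \<open>r \<noteq> 0\<close> by (simp add: vec3_eq_iff u_def w_def field_simps)
    then show ?thesis unfolding C_def by blast
  qed
  then have "None \<in> C" "Some (0, 0) \<in> C" "Some (z, t) \<in> C"
    using z by (simp_all add: lift_def)
  ultimately show "on_C_circle None (Some (0, 0)) (Some (z, t))"
    unfolding on_C_circle_def by blast
qed

lemma on_C_circle_isometry_invariant:
  assumes "herm_isometry B" "acts B p p'" "acts B q q'" "acts B r r'" "on_C_circle p q r"
  shows "on_C_circle p' q' r'"
proof -
  obtain C where "C \<in> C_circles" and pqr: "p \<in> C" "q \<in> C" "r \<in> C"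
    using assms(5) unfolding on_C_circle_def by blast
  then obtain u w where C: "herm u u = 1" "herm w w = -1" "herm u w = 0"
      and C_eq: "C = {p. \<exists>a b. lift p = a *s u + b *s w}"
    unfolding C_circles_def by blast
  define C' where "C' = {p. \<exists>a b. lift p = a *s (B *v u) + b *s (B *v w)}"
  have "C' \<in> C_circles"
    unfolding C_circles_def C'_def
    by (intro CollectI exI[of _ "B *v u"] exI[of _ "B *v w"]) (simp add: C(1-3) herm_isometryD[OF assms(1)])
  moreover have "s' \<in> C'" if s: "s \<in> C" "acts B s s'" for s s'
  proof -
    obtain a b e where ab: "lift s = a *s u + b *s w" and e: "e \<noteq> 0" "B *v lift s = e *s lift s'"
      using s C_eq acts_def by blast
    have "e *s lift s' = a *s (B *v u) + b *s (B *v w)"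
      using e(2) ab by (simp add: matrix_vector_right_distrib matrix_vector_mult_scale)
    with e(1) have "lift s' = (a/e) *s (B *v u) + (b/e) *s (B *v w)"
      by (simp add: vec3_eq_iff field_simps)
    then show ?thesis unfolding C'_def by blast
  qed
  ultimately show ?thesis unfolding on_C_circle_def using pqr assms(2-4) by blast
qed

section \<open>Invariance under \<open>PU(2,1)\<close>\<close>

lemma pu_equiv_iff:
  "pu_equiv (p1, p2, p3, p4) (q1, q2, q3, q4) \<longleftrightarrow>
     (\<exists>A. herm_isometry A \<and> acts A p1 q1 \<and> acts A p2 q2 \<and> acts A p3 q3 \<and> acts A p4 q4)"
  by (auto simp: pu_equiv_def U21_iff_herm_isometry)

lemma pu_equiv_refl: "pu_equiv p p"
  by (cases p) (auto simp: pu_equiv_iff intro!: exI[of _ "mat 1"] herm_isometry_one acts_one)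

lemma pu_equiv_sym: assumes "pu_equiv p q" shows "pu_equiv q p"
proof -
  obtain p1 p2 p3 p4 q1 q2 q3 q4 where pq: "p = (p1, p2, p3, p4)" "q = (q1, q2, q3, q4)"
    by (cases p, cases q) auto
  obtain A where A: "herm_isometry A" "acts A p1 q1" "acts A p2 q2" "acts A p3 q3" "acts A p4 q4"
    using assms pq pu_equiv_iff by blast
  obtain B where B: "B ** A = mat 1" "A ** B = mat 1" using herm_isometry_inverse[OF A(1)] .
  have "herm_isometry B" by (rule herm_isometry_right_inverse[OF A(1) B(2)])
  moreover have "acts B q1 p1" "acts B q2 p2" "acts B q3 p3" "acts B q4 p4"
    using A(2-5) acts_left_inverse B(1) by blast+
  ultimately show ?thesis using pq pu_equiv_iff by blast
qed

lemma pu_equiv_trans: assumes "pu_equiv p q" "pu_equiv q r" shows "pu_equiv p r"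
proof -
  obtain p1 p2 p3 p4 q1 q2 q3 q4 r1 r2 r3 r4
    where pqr: "p = (p1, p2, p3, p4)" "q = (q1, q2, q3, q4)" "r = (r1, r2, r3, r4)"
    by (cases p, cases q, cases r) auto
  obtain A where A: "herm_isometry A" "acts A p1 q1" "acts A p2 q2" "acts A p3 q3" "acts A p4 q4"
    using assms(1) pqr pu_equiv_iff by blast
  obtain B where B: "herm_isometry B" "acts B q1 r1" "acts B q2 r2" "acts B q3 r3" "acts B q4 r4"
    using assms(2) pqr pu_equiv_iff by blast
  have "herm_isometry (B ** A)" using A(1) B(1) herm_isometry_mult by blast
  moreover have "acts (B ** A) p1 r1" "acts (B ** A) p2 r2" "acts (B ** A) p3 r3" "acts (B ** A) p4 r4"
    using A B acts_mult by blast+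
  ultimately show ?thesis using pqr pu_equiv_iff by blast
qed

lemma C4''_isometry_invariant:
  assumes "(p1, p2, p3, p4) \<in> C4''" and A: "herm_isometry A"
    "acts A p1 q1" "acts A p2 q2" "acts A p3 q3" "acts A p4 q4"
  shows "(q1, q2, q3, q4) \<in> C4''"
proof -
  obtain B where B: "B ** A = mat 1" "A ** B = mat 1" using herm_isometry_inverse[OF A(1)] .
  have hB: "herm_isometry B" by (rule herm_isometry_right_inverse[OF A(1) B(2)])
  have Bq: "acts B q1 p1" "acts B q2 p2" "acts B q3 p3" "acts B q4 p4"
    using A(2-5) acts_left_inverse B(1) by blast+
  have p: "p1 \<noteq> p2" "p1 \<noteq> p3" "p1 \<noteq> p4" "p2 \<noteq> p3" "p2 \<noteq> p4" "p3 \<noteq> p4"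
    "\<not> on_C_circle p1 p2 p3" "\<not> on_C_circle p2 p3 p4"
    "\<not> (\<exists>A\<in>U21. acts A p2 p2 \<and> acts A p3 p3 \<and> acts A p1 p4)"
    using assms(1) unfolding C4''_def by auto
  have "q1 \<noteq> q2" "q1 \<noteq> q3" "q1 \<noteq> q4" "q2 \<noteq> q3" "q2 \<noteq> q4" "q3 \<noteq> q4"
    using p(1-6) acts_injective[OF A(1)] A(2-5) by metis+
  moreover have "\<not> on_C_circle q1 q2 q3" "\<not> on_C_circle q2 q3 q4"
    using on_C_circle_isometry_invariant[OF hB] Bq p(7,8) by blast+
  moreover have "\<not> (\<exists>D\<in>U21. acts D q2 q2 \<and> acts D q3 q3 \<and> acts D q1 q4)"
  proof
    assume "\<exists>D\<in>U21. acts D q2 q2 \<and> acts D q3 q3 \<and> acts D q1 q4"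
    then obtain D where D: "herm_isometry D" "acts D q2 q2" "acts D q3 q3" "acts D q1 q4"
      by (auto simp: U21_iff_herm_isometry)
    have "herm_isometry (B ** (D ** A))" using hB D(1) A(1) herm_isometry_mult by blast
    moreover have "acts (B ** (D ** A)) p2 p2" "acts (B ** (D ** A)) p3 p3"
      "acts (B ** (D ** A)) p1 p4"
      using acts_mult A(2-5) D(2-4) Bq by blast+
    ultimately show False using p(9) by (auto simp: U21_iff_herm_isometry)
  qed
  ultimately show ?thesis unfolding C4''_def by auto
qed

lemma cartan_isometry_invariant:
  assumes "herm_isometry A" "acts A p1 q1" "acts A p2 q2" "acts A p3 q3"
  shows "cartan p1 p2 p3 = cartan q1 q2 q3"
proof -
  obtain c1 c2 c3 where c: "c1 \<noteq> 0" "c2 \<noteq> 0" "c3 \<noteq> 0"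
    "A *v lift p1 = c1 *s lift q1" "A *v lift p2 = c2 *s lift q2" "A *v lift p3 = c3 *s lift q3"
    using assms(2-4) acts_def by metis
  have H: "herm (lift pi) (lift pj) = ci * cnj cj * herm (lift qi) (lift qj)"
    if "A *v lift pi = ci *s lift qi" "A *v lift pj = cj *s lift qj" for pi pj qi qj ci cj
    using herm_isometryD[OF assms(1), of "lift pi" "lift pj"] that
    by (simp add: herm_scale_left herm_scale_right ac_simps)
  define r where "r = (cmod c1)\<^sup>2 * (cmod c2)\<^sup>2 * (cmod c3)\<^sup>2"
  have "r > 0" using c by (simp add: r_def)
  have "complex_of_real r = (c1 * cnj c1) * (c2 * cnj c2) * (c3 * cnj c3)"
    by (simp only: r_def of_real_mult complex_norm_square)
  then have "- (herm (lift p1) (lift p2) * herm (lift p2) (lift p3) * herm (lift p3) (lift p1))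
     = complex_of_real r
       * (- (herm (lift q1) (lift q2) * herm (lift q2) (lift q3) * herm (lift q3) (lift q1)))"
    unfolding H[OF c(4,5)] H[OF c(5,6)] H[OF c(6,4)] by (simp only: mult_ac minus_mult_right)
  then show ?thesis unfolding cartan_def by (simp only: Arg_times_of_real[OF \<open>r > 0\<close>])
qed

section \<open>The normal form\<close>

lemma NF_in_C4''_iff: "NF a z t \<in> C4'' \<longleftrightarrow> z \<noteq> 0 \<and> t \<noteq> (cmod z)\<^sup>2 * tan a"
proof -
  have "\<not> on_C_circle (Some (1, tan a)) None (Some (0, 0))"
    using on_C_circle_inf_origin_iff on_C_circle_rotate by (metis one_neq_zero)
  moreover have "(\<exists>A\<in>U21. acts A None None \<and> acts A (Some (0, 0)) (Some (0, 0))
      \<and> acts A (Some (1, tan a)) (Some (z, t))) \<longleftrightarrow> z \<noteq> 0 \<and> t = (cmod z)\<^sup>2 * tan a"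
    unfolding stabiliser_orbit_iff by auto
  ultimately show ?thesis
    unfolding C4''_def NF_def by (auto simp: on_C_circle_inf_origin_iff)
qed

lemma tan_eq_imp_eq:
  assumes "a \<in> {-pi/2<..<pi/2}" "a' \<in> {-pi/2<..<pi/2}" "tan a = tan a'" shows "a = a'"
proof -
  have "arctan (tan a) = a" "arctan (tan a') = a'"
    using assms(1,2) by (auto intro!: arctan_tan)
  then show ?thesis using assms(3) by metis
qed

lemma ex_arctan_interval: obtains a where "a \<in> {-pi/2<..<pi/2}" "tan a = s"
  using that[of "arctan s"] arctan_lbound[of s] arctan_ubound[of s] by (simp add: tan_arctan)

lemma isometry_to_inf_origin:
  assumes "p \<noteq> q" obtains A where "herm_isometry A" "acts A p None" "acts A q (Some (0, 0))"
proof -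
  obtain A1 where A1: "herm_isometry A1" "acts A1 p None" using isometry_to_inf by blast
  obtain q' where q': "acts A1 q q'" using acts_exists[OF A1(1)] by blast
  then have "q' \<noteq> None" using acts_injective[OF A1(1)] A1(2) assms by metis
  then obtain w s where "q' = Some (w, s)" by auto
  then obtain T where T: "herm_isometry T" "acts T None None" "acts T q' (Some (0, 0))"
    using isometry_translating_to_origin by blast
  show ?thesis
    using that[of "T ** A1"] A1 T q' herm_isometry_mult acts_mult by blast
qed

lemma exists_normalising_isometry:
  assumes x: "(p1, p2, p3, p4) \<in> C4''"
  obtains A a z t where "herm_isometry A" "a \<in> {-pi/2<..<pi/2}" "acts A p1 (Some (1, tan a))"
    "acts A p2 None" "acts A p3 (Some (0, 0))" "acts A p4 (Some (z, t))"
proof -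
  have "p2 \<noteq> p3" using x unfolding C4''_def by auto
  then obtain A2 where A2: "herm_isometry A2" "acts A2 p2 None" "acts A2 p3 (Some (0, 0))"
    by (rule isometry_to_inf_origin)
  obtain q1 q4 where q14: "acts A2 p1 q1" "acts A2 p4 q4" using acts_exists[OF A2(1)] by metis
  have "(q1, None, Some (0, 0), q4) \<in> C4''"
    by (rule C4''_isometry_invariant[OF x A2(1) q14(1) A2(2,3) q14(2)])
  then have "q1 \<noteq> None" "\<not> on_C_circle q1 None (Some (0, 0))" unfolding C4''_def by auto
  then have "q1 \<noteq> None" "\<not> on_C_circle None (Some (0, 0)) q1" using on_C_circle_rotate by blast+
  then obtain w u where q1: "q1 = Some (w, u)" and "w \<noteq> 0"
    using on_C_circle_inf_origin_iff by (metis option.exhaust prod.exhaust)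
  define k where "k = 1 / w"
  have "k \<noteq> 0" using \<open>w \<noteq> 0\<close> by (simp add: k_def)
  define A where "A = dilation k ** A2"
  have hA: "herm_isometry A"
    using herm_isometry_dilation[OF \<open>k \<noteq> 0\<close>] A2(1) herm_isometry_mult A_def by blast
  have "acts (dilation k) q1 (Some (1, (cmod k)\<^sup>2 * u))"
    using acts_dilation[OF \<open>k \<noteq> 0\<close>, of w u] q1 \<open>w \<noteq> 0\<close> by (simp add: k_def)
  then have a1: "acts A p1 (Some (1, (cmod k)\<^sup>2 * u))" using acts_mult q14(1) A_def by blast
  have a23: "acts A p2 None" "acts A p3 (Some (0, 0))"
    using acts_mult A2(2,3) acts_dilation_inf[OF \<open>k \<noteq> 0\<close>] acts_dilation_origin[OF \<open>k \<noteq> 0\<close>]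
    unfolding A_def by blast+
  obtain q4' where a4: "acts A p4 q4'" using acts_exists[OF hA] by blast
  have "(Some (1, (cmod k)\<^sup>2 * u), None, Some (0, 0), q4') \<in> C4''"
    by (rule C4''_isometry_invariant[OF x hA a1 a23 a4])
  then obtain z t where "q4' = Some (z, t)" unfolding C4''_def by (cases q4') auto
  moreover obtain a where "a \<in> {-pi/2<..<pi/2}" "tan a = (cmod k)\<^sup>2 * u"
    using ex_arctan_interval by blast
  ultimately show ?thesis using that hA a1 a23 a4 by metis
qed

lemma NF_pu_equiv_imp_eq:
  assumes "pu_equiv (NF a z t) (NF a' z' t')" "a \<in> {-pi/2<..<pi/2}" "a' \<in> {-pi/2<..<pi/2}"
  shows "(a, z, t) = (a', z', t')"
proof -
  obtain A where A: "herm_isometry A" "acts A (Some (1, tan a)) (Some (1, tan a'))" "acts A None None"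
      "acts A (Some (0, 0)) (Some (0, 0))" "acts A (Some (z, t)) (Some (z', t'))"
    using assms(1) unfolding NF_def pu_equiv_iff by blast
  obtain k where "k \<noteq> 0" and k: "\<And>z t. acts A (Some (z, t)) (Some (k * z, (cmod k)\<^sup>2 * t))"
    using stabiliser_acts_as_dilation[OF A(1,3,4)] by metis
  have "Some (k * 1, (cmod k)\<^sup>2 * tan a) = Some (1, tan a')" by (rule acts_unique[OF k A(2)])
  then have "k = 1" "tan a = tan a'" by auto
  moreover have "Some (k * z, (cmod k)\<^sup>2 * t) = Some (z', t')" by (rule acts_unique[OF k A(5)])
  ultimately have "z = z'" "t = t'" "tan a = tan a'" by auto
  then show ?thesis using tan_eq_imp_eq assms(2,3) by simp
qed

lemma cartan_NF:
  assumes "a \<in> {-pi/2<..<pi/2}" shows "cartan (Some (1, tan a)) None (Some (0, 0)) = a"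
proof -
  have "cos a > 0" using assms by (intro cos_gt_zero_pi) auto
  have "- (herm (lift (Some (1, tan a))) (lift None) * herm (lift None) (lift (Some (0, 0)))
          * herm (lift (Some (0, 0))) (lift (Some (1, tan a))))
        = 1 + \<i> * complex_of_real (tan a)"
    by (simp add: lift_def herm_vec3)
  also have "\<dots> = complex_of_real (1 / cos a) * exp (\<i> * complex_of_real a)"
    using \<open>cos a > 0\<close> by (simp add: complex_eq_iff Re_exp Im_exp tan_def)
  finally show ?thesis
    unfolding cartan_def using Arg_unique[of "1 / cos a" a] \<open>cos a > 0\<close> assms by fastforce
qed

section \<open>The quotient by \<open>PU(2,1)\<close>\<close>

definition pu_rel :: "(quad \<times> quad) set" where
  "pu_rel = {(p, q). p \<in> C4'' \<and> q \<in> C4'' \<and> pu_equiv p q}"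

lemma F4''_eq_quotient: "F4'' = C4'' // pu_rel"
  unfolding F4''_def pu_rel_def ..

lemma equiv_pu_rel: "equiv C4'' pu_rel"
  by (rule equivI)
    (auto simp: pu_rel_def pu_equiv_refl intro: refl_onI symI transI pu_equiv_sym pu_equiv_trans)

lemma F4''_class_subset: "X \<in> F4'' \<Longrightarrow> X \<subseteq> C4''"
  unfolding F4''_eq_quotient by (auto elim!: quotientE simp: pu_rel_def)

lemma F4''_class_pu_equiv: "X \<in> F4'' \<Longrightarrow> p \<in> X \<Longrightarrow> q \<in> X \<Longrightarrow> pu_equiv p q"
  unfolding F4''_eq_quotient
  by (auto elim!: quotientE simp: pu_rel_def intro: pu_equiv_trans pu_equiv_sym)

lemma F4''_class_contains_NF:
  assumes "X \<in> F4''" obtains a z t where "a \<in> {-pi/2<..<pi/2}" "NF a z t \<in> X"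
proof -
  obtain x where X: "X = pu_rel `` {x}" "x \<in> C4''" using assms unfolding F4''_eq_quotient by (rule quotientE)
  obtain p1 p2 p3 p4 where x: "x = (p1, p2, p3, p4)" by (cases x) auto
  obtain A a z t where A: "herm_isometry A" "a \<in> {-pi/2<..<pi/2}" "acts A p1 (Some (1, tan a))"
      "acts A p2 None" "acts A p3 (Some (0, 0))" "acts A p4 (Some (z, t))"
    using exists_normalising_isometry X(2) x by metis
  have "NF a z t \<in> C4''" unfolding NF_def using C4''_isometry_invariant X(2) x A by blast
  moreover have "pu_equiv x (NF a z t)" unfolding x NF_def pu_equiv_iff using A by blast
  ultimately have "NF a z t \<in> X" using X by (simp add: pu_rel_def)
  with A(2) show ?thesis by (rule that)
qed

lemma F4''_class_NF_unique:
  assumes "X \<in> F4''" "a \<in> {-pi/2<..<pi/2}" "NF a z t \<in> X" "a' \<in> {-pi/2<..<pi/2}" "NF a' z' t' \<in> X"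
  shows "(a, z, t) = (a', z', t')"
  using NF_pu_equiv_imp_eq[OF F4''_class_pu_equiv[OF assms(1,3,5)] assms(2,4)] .

lemma F4''_class_NF_params:
  assumes "X \<in> F4''" "a \<in> {-pi/2<..<pi/2}" "NF a z t \<in> X"
  shows "z \<noteq> 0" "t \<noteq> (cmod z)\<^sup>2 * tan a"
proof -
  have "NF a z t \<in> C4''" using F4''_class_subset[OF assms(1)] assms(3) by blast
  then show "z \<noteq> 0" "t \<noteq> (cmod z)\<^sup>2 * tan a" by (simp_all add: NF_in_C4''_iff)
qed

lemma F4''_class_cartan:
  assumes "X \<in> F4''" "a \<in> {-pi/2<..<pi/2}" "NF a z t \<in> X" "(p1, p2, p3, p4) \<in> X"
  shows "a = cartan p1 p2 p3"
proof -
  obtain A where A: "herm_isometry A" "acts A p1 (Some (1, tan a))" "acts A p2 None"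
      "acts A p3 (Some (0, 0))"
    using F4''_class_pu_equiv[OF assms(1,4,3)] unfolding NF_def pu_equiv_iff by blast
  show ?thesis using cartan_isometry_invariant[OF A] cartan_NF[OF assms(2)] by simp
qed

definition B0 :: "quad set \<Rightarrow> complex \<times> real \<times> real" where
  "B0 X = (case THE y. case y of (a, z, t) \<Rightarrow> a \<in> {-pi/2<..<pi/2} \<and> NF a z t \<in> X of
             (a, z, t) \<Rightarrow> (z, t, exp (tan a)))"

lemma B0_NF:
  assumes "X \<in> F4''" "a \<in> {-pi/2<..<pi/2}" "NF a z t \<in> X"
  shows "B0 X = (z, t, exp (tan a))"
proof -
  have "(THE y. case y of (a, z, t) \<Rightarrow> a \<in> {-pi/2<..<pi/2} \<and> NF a z t \<in> X) = (a, z, t)"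
    using assms F4''_class_NF_unique by (intro the_equality) auto
  then show ?thesis by (simp add: B0_def)
qed

lemma bij_betw_B0: "bij_betw B0 F4'' C'_Hstar"
proof (rule bij_betwI')
  fix X Y assume X: "X \<in> F4''" and Y: "Y \<in> F4''"
  obtain a z t where a: "a \<in> {-pi/2<..<pi/2}" "NF a z t \<in> X" using F4''_class_contains_NF[OF X] .
  obtain a' z' t' where a': "a' \<in> {-pi/2<..<pi/2}" "NF a' z' t' \<in> Y" using F4''_class_contains_NF[OF Y] .
  show "B0 X = B0 Y \<longleftrightarrow> X = Y"
  proof
    assume "B0 X = B0 Y"
    then have "z = z'" "t = t'" "a = a'"
      using B0_NF[OF X a] B0_NF[OF Y a'] tan_eq_imp_eq[OF a(1) a'(1)] by auto
    then have "NF a z t \<in> X \<inter> Y" using a a' by simp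
    then show "X = Y" using quotient_disj[OF equiv_pu_rel] X Y unfolding F4''_eq_quotient by blast
  qed simp
next
  fix X assume X: "X \<in> F4''"
  obtain a z t where a: "a \<in> {-pi/2<..<pi/2}" "NF a z t \<in> X" using F4''_class_contains_NF[OF X] .
  have "z \<noteq> 0" "t \<noteq> (cmod z)\<^sup>2 * tan a" using F4''_class_NF_params[OF X a] by auto
  then show "B0 X \<in> C'_Hstar"
    using B0_NF[OF X a] by (auto simp: C'_Hstar_def field_simps)
next
  fix y assume "y \<in> C'_Hstar"
  then obtain z t r where y: "y = (z, t, r)" "z \<noteq> 0" "r > 0" "ln r \<noteq> t / (cmod z)\<^sup>2"
    unfolding C'_Hstar_def by auto
  obtain a where a: "a \<in> {-pi/2<..<pi/2}" "tan a = ln r" using ex_arctan_interval by blast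
  have "t \<noteq> (cmod z)\<^sup>2 * tan a" using y(2,4) a(2) by (auto simp: field_simps)
  then have NF: "NF a z t \<in> C4''" using NF_in_C4''_iff y(2) by blast
  define X where "X = pu_rel `` {NF a z t}"
  have X: "X \<in> F4''" unfolding X_def F4''_eq_quotient using NF by (rule quotientI)
  have "NF a z t \<in> X" unfolding X_def using equiv_class_self[OF equiv_pu_rel NF] .
  then have "B0 X = y" using B0_NF[OF X a(1)] a(2) y(1,3) by simp
  with X show "\<exists>X\<in>F4''. y = B0 X" by blast
qed

theorem theorem4p1:
  shows "(\<forall>X\<in>F4''.
            (\<exists>!(a, z, t). a \<in> {-pi/2<..<pi/2} \<and> NF a z t \<in> X)
          \<and> (\<forall>a z t. a \<in> {-pi/2<..<pi/2} \<and> NF a z t \<in> X \<longrightarrow>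
               z \<noteq> 0 \<and> t \<noteq> (cmod z)\<^sup>2 * tan a
               \<and> (\<forall>p1 p2 p3 p4. (p1, p2, p3, p4) \<in> X \<longrightarrow> a = cartan p1 p2 p3)))
       \<and> (\<exists>B0. bij_betw B0 F4'' C'_Hstar
              \<and> (\<forall>X\<in>F4''. \<forall>a z t. a \<in> {-pi/2<..<pi/2} \<and> NF a z t \<in> X \<longrightarrow>
                    B0 X = (z, t, exp (tan a))))"
proof (intro conjI ballI)
  fix X assume X: "X \<in> F4''"
  obtain a z t where "a \<in> {-pi/2<..<pi/2}" "NF a z t \<in> X" using F4''_class_contains_NF[OF X] .
  then show "\<exists>!(a, z, t). a \<in> {-pi/2<..<pi/2} \<and> NF a z t \<in> X"
    using F4''_class_NF_unique[OF X] by (intro ex1I[of _ "(a, z, t)"]) auto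
next
  fix X assume X: "X \<in> F4''"
  show "\<forall>a z t. a \<in> {-pi/2<..<pi/2} \<and> NF a z t \<in> X \<longrightarrow> z \<noteq> 0 \<and> t \<noteq> (cmod z)\<^sup>2 * tan a
          \<and> (\<forall>p1 p2 p3 p4. (p1, p2, p3, p4) \<in> X \<longrightarrow> a = cartan p1 p2 p3)"
    using F4''_class_NF_params[OF X] F4''_class_cartan[OF X] by blast
next
  show "\<exists>B0. bij_betw B0 F4'' C'_Hstar \<and> (\<forall>X\<in>F4''. \<forall>a z t. a \<in> {-pi/2<..<pi/2} \<and> NF a z t \<in> X \<longrightarrow>
          B0 X = (z, t, exp (tan a)))"
    using bij_betw_B0 B0_NF by blast
qed

end
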